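(* Let $X_n(\underline{d})=X_n(d_1,\dots,d_r)\subset\mathbb{C}P^{n+r}$ be a complete intersection with canonical bundle $K$, set $c_1=n+r+1-\sum_{i=1}^rd_i$, and let $k,N$ be integers with $N>0$. Then $$\chi\left(X_n(\underline{d}),K^{\frac{k}{N}}\right)=\sum_{j=0}^r(-1)^{n+r+j}\sum_{1\leqslant k_1<\dots<k_j\leqslant r}\binom{\frac{k}{N}c_1-1+d_{k_1}+\cdots+d_{k_j}}{n+r},$$ where the sum $d_{k_1}+\dots+d_{k_j}$ is $0$ for $j=0$. Moreover, if $c_1\equiv 0\pmod N$, then $\chi(X_n(\underline{d}),K^{k/N})$ is an integer.
   Context: A complete intersection $X_n(d_1,\dots,d_r)\subset\mathbb{C}P^{n+r}$ is a compact complex $n$-dimensional manifold given as the transversal intersection of $r$ nonsingular hypersurfaces of degrees $d_1,\dots,d_r$; its canonical bundle is $\gamma^{-c_1}$ where $\gamma$ is the pullback of the hyperplane bundle. For a rational number $s$, $\chi(M,K^s)=\big(e^{-s\,c_1(M)}{\rm td}(TM)\big)[M]$ is the genus with characteristic power series $e^{-sx}\frac{x}{1-e^{-x}}$. Generalized binomial coefficients: $\binom{a}{m}=\frac{a(a-1)\cdots(a-m+1)}{m!}$ for rational $a$. *)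

theory Defs
  imports "HOL-Computational_Algebra.Formal_Power_Series"
begin

definition one_minus_exp_div_X :: "rat \<Rightarrow> rat fps" where
  "one_minus_exp_div_X c = fps_shift 1 (1 - fps_exp (- c))"

definition todd_fps :: "rat fps" where
  "todd_fps = inverse (one_minus_exp_div_X 1)"

text \<open>First Chern number c_1 of X_n(d_1,...,d_r) in units of the hyperplane class x:
  c_1 = n + r + 1 - (d_1 + ... + d_r).\<close>
definition ci_c1 :: "nat \<Rightarrow> nat list \<Rightarrow> int" where
  "ci_c1 n ds = int n + int (length ds) + 1 - (\<Sum>d\<leftarrow>ds. int d)"

text \<open>chi(X_n(d), K^s) = (e^(-s c_1(M)) td(TM))[M].  The cohomology of the complete
  intersection is evaluated via x = c_1(gamma), x^n[M] = d_1...d_r, c_1(M) = c_1 x and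
  TM (+) (gamma^d_1 (+) ... (+) gamma^d_r) = (n+r+1) gamma, so that
  td(TM) = (x/(1-e^(-x)))^(n+r+1) * prod_i (1-e^(-d_i x))/(d_i x).\<close>
definition ci_chi :: "nat \<Rightarrow> nat list \<Rightarrow> rat \<Rightarrow> rat" where
  "ci_chi n ds s =
     (\<Prod>d\<leftarrow>ds. of_nat d) *
     fps_nth (fps_exp (- s * of_int (ci_c1 n ds)) * todd_fps ^ (n + length ds + 1) *
              (\<Prod>d\<leftarrow>ds. fps_const (inverse (of_nat d)) * one_minus_exp_div_X (of_nat d))) n"

end

theory Submission
  imports Defs
begin

text \<open>
  Write T(x) = x / (1 - e^(-x)). Multiplying the Hirzebruch-Riemann-Roch integrand of ci_chi by
  x^r and by the degree d_1 ... d_r turns chi(X, K^s) into the coefficient of x^(n+r) in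
  e^(-s c_1 x) T(x)^(n+r+1) prod_i (1 - e^(-d_i x)). Expanding the product over subsets S of
  {1..r} leaves the coefficients [x^m] e^(-a x) T(x)^(m+1) = chi(CP^m, O(-a)) with
  a = s c_1 + sum_(i in S) d_i, and these equal (-1)^m (a-1 choose m). The closed form follows by
  induction on m from two recurrences, one coming from 1 - e^(-x) = x / T(x), the other from the
  differential equation x T' = T - T^2 e^(-x). If N divides c_1, every a is an integer, and so is
  every binomial coefficient.
\<close>

unbundle fps_syntax

lemma gbinomial_Suc_eq:
  "(b :: 'a :: field_char_0) gchoose Suc m = (b gchoose m) * (b - of_nat m) / of_nat (Suc m)"
proof -
  have "of_nat (Suc m) * (b gchoose Suc m) = (b - of_nat m) * (b gchoose m)"
    by (simp only: gbinomial_absorption gbinomial_absorb_comp)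
  then show ?thesis
    by (simp add: field_simps del: of_nat_Suc)
qed

lemma Ints_gbinomial: "(x :: 'a :: field_char_0) \<in> \<int> \<Longrightarrow> x gchoose m \<in> \<int>"
  by (auto elim!: Ints_cases simp flip: of_int_gbinomial)

lemma sum_Pow_by_card:
  assumes "finite A"
  shows "(\<Sum>S\<in>Pow A. g S) = (\<Sum>j = 0..card A. \<Sum>S | S \<subseteq> A \<and> card S = j. g S)"
proof -
  have "(\<Sum>j = 0..card A. \<Sum>S | S \<in> Pow A \<and> card S = j. g S) = (\<Sum>S\<in>Pow A. g S)"
    by (rule sum.group) (auto simp: assms card_mono)
  then show ?thesis
    by simp
qed

lemma prod_list_map_eq_prod_nth: "(\<Prod>x\<leftarrow>xs. f x) = (\<Prod>i<length xs. f (xs ! i))"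
  by (simp add: prod.list_conv_set_nth lessThan_atLeast0)

lemma fps_exp_sum: "fps_exp (\<Sum>i\<in>S. f i) = (\<Prod>i\<in>S. fps_exp (f i :: 'a :: field_char_0))"
  by (induction S rule: infinite_finite_induct) (simp_all add: fps_exp_add_mult)

lemma fps_nth_neg_one_power_mult:
  "((- 1) ^ k * f :: 'a :: comm_ring_1 fps) $ n = (- 1) ^ k * f $ n"
proof -
  have "(- 1 :: 'a fps) ^ k = fps_const ((- 1) ^ k)"
    by (metis fps_const_neg fps_const_1_eq_1 fps_const_power)
  then show ?thesis
    by simp
qed

lemma prod_list_fps_const_X_mult:
  "(\<Prod>x\<leftarrow>xs. fps_const (c x) * fps_X * f x) =
     fps_const (\<Prod>x\<leftarrow>xs. c x) * fps_X ^ length xs * (\<Prod>x\<leftarrow>xs. f x :: 'a :: comm_ring_1 fps)"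
  by (induction xs) (simp_all add: mult_ac)

lemma fps_X_mult_one_minus_exp_div_X: "fps_X * one_minus_exp_div_X c = 1 - fps_exp (- c)"
  by (auto simp: fps_eq_iff one_minus_exp_div_X_def)

lemma one_minus_fps_exp_eq:
  assumes "c \<noteq> 0"
  shows "1 - fps_exp (- c) = fps_const c * fps_X * (fps_const (inverse c) * one_minus_exp_div_X c)"
proof -
  have "fps_const c * fps_X * (fps_const (inverse c) * one_minus_exp_div_X c)
      = fps_const (c * inverse c) * (fps_X * one_minus_exp_div_X c)"
    by (simp only: fps_const_mult[symmetric] mult_ac)
  then show ?thesis
    by (simp add: assms fps_X_mult_one_minus_exp_div_X)
qed

lemma one_minus_exp_div_X_nth_0 [simp]: "one_minus_exp_div_X c $ 0 = c"
  by (simp add: one_minus_exp_div_X_def)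

lemma todd_fps_nth_0 [simp]: "todd_fps $ 0 = 1"
  by (simp add: todd_fps_def)

lemma todd_fps_mult_one_minus_exp_div_X: "todd_fps * one_minus_exp_div_X 1 = 1"
  unfolding todd_fps_def by (simp add: inverse_mult_eq_1)

lemma fps_X_mult_deriv_todd_fps:
  "fps_X * fps_deriv todd_fps = todd_fps - todd_fps ^ 2 * fps_exp (- 1)"
proof -
  define E where "E = one_minus_exp_div_X 1"
  have TE: "todd_fps * E = 1"
    unfolding E_def by (rule todd_fps_mult_one_minus_exp_div_X)
  have "fps_deriv (fps_X * E) = fps_deriv (1 - fps_exp (- 1))"
    unfolding E_def fps_X_mult_one_minus_exp_div_X ..
  then have XdE: "fps_X * fps_deriv E = fps_exp (- 1) - E"
    by (simp add: algebra_simps flip: fps_const_neg)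
  have "fps_deriv (todd_fps * E) = 0"
    by (simp add: TE)
  then have dTE: "fps_deriv todd_fps * E = - todd_fps * fps_deriv E"
    by (simp add: algebra_simps eq_neg_iff_add_eq_0)
  have "fps_X * fps_deriv todd_fps = todd_fps * (fps_X * (fps_deriv todd_fps * E))"
    using TE by (simp add: algebra_simps)
  also have "\<dots> = todd_fps * (fps_X * (- todd_fps * fps_deriv E))"
    by (simp only: dTE)
  also have "\<dots> = - (todd_fps ^ 2 * (fps_X * fps_deriv E))"
    by (simp add: algebra_simps power2_eq_square)
  also have "\<dots> = todd_fps - todd_fps ^ 2 * fps_exp (- 1)"
    using TE by (simp add: XdE algebra_simps power2_eq_square)
  finally show ?thesis .
qed

definition todd_exp_coeff :: "nat \<Rightarrow> rat \<Rightarrow> rat" where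
  "todd_exp_coeff m a = (fps_exp (- a) * todd_fps ^ Suc m) $ m"

lemma todd_exp_coeff_Suc:
  "todd_exp_coeff (Suc m) a = todd_exp_coeff (Suc m) (a + 1) + todd_exp_coeff m a"
proof -
  have "fps_exp (- a) * todd_fps ^ Suc (Suc m) - fps_exp (- (a + 1)) * todd_fps ^ Suc (Suc m)
      = fps_exp (- a) * (fps_X * one_minus_exp_div_X 1) * todd_fps ^ Suc (Suc m)"
    by (simp add: fps_X_mult_one_minus_exp_div_X algebra_simps flip: fps_exp_add_mult)
  also have "\<dots> = fps_X * (fps_exp (- a) * todd_fps ^ Suc m)"
    using todd_fps_mult_one_minus_exp_div_X by (simp add: algebra_simps)
  finally have "(fps_exp (- a) * todd_fps ^ Suc (Suc m)
      - fps_exp (- (a + 1)) * todd_fps ^ Suc (Suc m)) $ Suc m = todd_exp_coeff m a"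
    by (simp add: todd_exp_coeff_def)
  then show ?thesis
    by (simp add: todd_exp_coeff_def)
qed

lemma todd_exp_coeff_shift:
  "a * todd_exp_coeff m a + of_nat (Suc m) * todd_exp_coeff (Suc m) (a + 1) = 0"
proof -
  define g where "g = fps_exp (- a) * todd_fps ^ Suc m"
  have exp_shift: "fps_exp (- 1 - a) = fps_exp (- 1) * fps_exp (- a)"
    using fps_exp_add_mult[of "- 1" "- a"] by simp
  have "fps_deriv (todd_fps ^ Suc m) =
      fps_const (of_nat (Suc m)) * fps_deriv todd_fps * todd_fps ^ m"
    by (simp only: fps_deriv_power diff_Suc_1)
  then have "fps_X * fps_deriv g = fps_const (- a) * (fps_X * g)
      + fps_const (of_nat (Suc m)) * fps_exp (- a) * todd_fps ^ m * (fps_X * fps_deriv todd_fps)"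
    unfolding g_def fps_deriv_mult by (simp add: algebra_simps del: power_Suc)
  also have "\<dots> = fps_const (- a) * (fps_X * g) + fps_const (of_nat (Suc m)) * g
      - fps_const (of_nat (Suc m)) * (fps_exp (- (a + 1)) * todd_fps ^ Suc (Suc m))"
    by (simp add: fps_X_mult_deriv_todd_fps g_def algebra_simps power2_eq_square exp_shift)
  finally have deriv_eq: "fps_X * fps_deriv g = \<dots>" .
  have "of_nat (Suc m) * g $ Suc m = (fps_X * fps_deriv g) $ Suc m"
    by simp
  also have "\<dots> = of_nat (Suc m) * g $ Suc m - a * todd_exp_coeff m a
      - of_nat (Suc m) * todd_exp_coeff (Suc m) (a + 1)"
    unfolding deriv_eq by (simp add: todd_exp_coeff_def g_def)
  finally show ?thesis
    by (simp add: algebra_simps)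
qed

lemma todd_exp_coeff_eq_gbinomial: "todd_exp_coeff m a = (- 1) ^ m * ((a - 1) gchoose m)"
proof (induction m arbitrary: a)
  case 0
  then show ?case by (simp add: todd_exp_coeff_def)
next
  case (Suc m)
  have "todd_exp_coeff (Suc m) (a + 1) = - a / of_nat (Suc m) * todd_exp_coeff m a"
    using todd_exp_coeff_shift[of a m] by (simp add: field_simps del: of_nat_Suc)
  then have "todd_exp_coeff (Suc m) a = (of_nat (Suc m) - a) / of_nat (Suc m) * todd_exp_coeff m a"
    using todd_exp_coeff_Suc[of m a] by (simp add: field_simps del: of_nat_Suc)
  then show ?case
    using Suc.IH[of a]
    by (simp add: gbinomial_Suc_eq field_simps del: of_nat_Suc) (simp add: algebra_simps)
qed

lemma prod_list_one_minus_fps_exp: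
  "(\<Prod>d\<leftarrow>ds. 1 - fps_exp (- of_nat d)) =
     (\<Sum>S\<in>Pow {..<length ds}.
        (- 1) ^ card S * fps_exp (- (\<Sum>i\<in>S. of_nat (ds ! i) :: 'a :: field_char_0)))"
  by (simp add: prod_list_map_eq_prod_nth prod_diff_conv_sum fps_exp_sum flip: sum_negf)

lemma ci_chi_eq_coeff:
  assumes "0 \<notin> set ds"
  shows "ci_chi n ds s = (fps_exp (- s * of_int (ci_c1 n ds)) * todd_fps ^ (n + length ds + 1) *
           (\<Prod>d\<leftarrow>ds. 1 - fps_exp (- of_nat d))) $ (n + length ds)"
proof -
  define G where "G = fps_exp (- s * of_int (ci_c1 n ds)) * todd_fps ^ (n + length ds + 1)"
  define P where "P = (\<Prod>d\<leftarrow>ds. fps_const (inverse (of_nat d)) * one_minus_exp_div_X (of_nat d))"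
  have "(\<Prod>d\<leftarrow>ds. 1 - fps_exp (- of_nat d)) =
      (\<Prod>d\<leftarrow>ds. fps_const (of_nat d) * fps_X *
                (fps_const (inverse (of_nat d)) * one_minus_exp_div_X (of_nat d)))"
    using assms
    by (intro arg_cong[where f = prod_list] map_cong refl one_minus_fps_exp_eq)
      (metis of_nat_eq_0_iff)
  also have "\<dots> = fps_const (\<Prod>d\<leftarrow>ds. of_nat d) * fps_X ^ length ds * P"
    unfolding P_def by (rule prod_list_fps_const_X_mult)
  finally have prod_eq: "(\<Prod>d\<leftarrow>ds. 1 - fps_exp (- of_nat d)) = \<dots>" .
  have "ci_chi n ds s = (\<Prod>d\<leftarrow>ds. of_nat d) * (G * P) $ n"
    by (simp only: ci_chi_def G_def P_def mult.assoc)
  also have "\<dots> =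
      (fps_X ^ length ds * (fps_const (\<Prod>d\<leftarrow>ds. of_nat d) * (G * P))) $ (n + length ds)"
    by (simp add: fps_X_power_mult_nth)
  also have "\<dots> = (G * (\<Prod>d\<leftarrow>ds. 1 - fps_exp (- of_nat d))) $ (n + length ds)"
    unfolding prod_eq by (simp only: mult_ac)
  finally show ?thesis
    unfolding G_def .
qed

lemma ci_chi_eq_sum_Pow:
  assumes "0 \<notin> set ds"
  shows "ci_chi n ds s = (\<Sum>S\<in>Pow {..<length ds}. (- 1) ^ (n + length ds + card S) *
           ((s * of_int (ci_c1 n ds) - 1 + (\<Sum>i\<in>S. of_nat (ds ! i))) gchoose (n + length ds)))"
proof -
  define m where "m = n + length ds"
  define a where "a = s * of_int (ci_c1 n ds)"
  define dS where "dS S = (\<Sum>i\<in>S. of_nat (ds ! i) :: rat)" for S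
  have twist: "fps_exp (- a) * todd_fps ^ Suc m * ((- 1) ^ card S * fps_exp (- dS S))
      = (- 1) ^ card S * (fps_exp (- (a + dS S)) * todd_fps ^ Suc m)" for S
    using fps_exp_add_mult[of "- a" "- dS S"] by (simp add: mult_ac)
  have "ci_chi n ds s = (fps_exp (- a) * todd_fps ^ Suc m *
      (\<Sum>S\<in>Pow {..<length ds}. (- 1) ^ card S * fps_exp (- dS S))) $ m"
    using ci_chi_eq_coeff[OF assms] unfolding prod_list_one_minus_fps_exp m_def a_def dS_def by simp
  also have "\<dots> = (\<Sum>S\<in>Pow {..<length ds}. (- 1) ^ card S * todd_exp_coeff m (a + dS S))"
    by (simp only: sum_distrib_left fps_sum_nth twist fps_nth_neg_one_power_mult todd_exp_coeff_def)
  also have "\<dots> = (\<Sum>S\<in>Pow {..<length ds}. (- 1) ^ (m + card S) * ((a - 1 + dS S) gchoose m))"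
    by (simp add: todd_exp_coeff_eq_gbinomial power_add algebra_simps)
  finally show ?thesis
    unfolding m_def a_def dS_def .
qed

lemma ci_chi_eq_gbinomial_sum:
  assumes "0 \<notin> set ds"
  shows "ci_chi n ds s =
           (\<Sum>j = 0..length ds. (- 1) ^ (n + length ds + j) *
              (\<Sum>S | S \<subseteq> {..<length ds} \<and> card S = j.
                 (s * of_int (ci_c1 n ds) - 1 + (\<Sum>i\<in>S. of_nat (ds ! i))) gchoose (n + length ds)))"
proof -
  define m where "m = n + length ds"
  define b where "b S = (s * of_int (ci_c1 n ds) - 1 + (\<Sum>i\<in>S. of_nat (ds ! i))) gchoose m" for S
  have "ci_chi n ds s = (\<Sum>S\<in>Pow {..<length ds}. (- 1) ^ (m + card S) * b S)"
    unfolding ci_chi_eq_sum_Pow[OF assms] m_def b_def ..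
  also have "\<dots> = (\<Sum>j = 0..length ds.
      \<Sum>S | S \<subseteq> {..<length ds} \<and> card S = j. (- 1) ^ (m + card S) * b S)"
    by (rule sum_Pow_by_card[OF finite_lessThan, unfolded card_lessThan])
  also have "\<dots> = (\<Sum>j = 0..length ds.
      (- 1) ^ (m + j) * (\<Sum>S | S \<subseteq> {..<length ds} \<and> card S = j. b S))"
    unfolding sum_distrib_left by (intro sum.cong refl) simp
  finally show ?thesis
    unfolding m_def b_def .
qed

lemma ci_chi_in_Ints:
  assumes "0 \<notin> set ds" and "s * of_int (ci_c1 n ds) \<in> \<int>"
  shows "ci_chi n ds s \<in> \<int>"
proof -
  have binomial_Ints:
    "(s * of_int (ci_c1 n ds) - 1 + (\<Sum>i\<in>S. of_nat (ds ! i))) gchoose m \<in> \<int>" for S m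
    by (intro Ints_gbinomial Ints_add Ints_diff Ints_sum Ints_of_nat Ints_1 assms(2))
  show ?thesis
    unfolding ci_chi_eq_sum_Pow[OF assms(1)]
    by (intro Ints_sum Ints_mult Ints_power Ints_minus Ints_1 binomial_Ints)
qed

theorem theorem4p3:
  fixes n :: nat and ds :: "nat list" and k N :: int
  assumes "\<forall>d \<in> set ds. d \<ge> 1"
    and "N > 0"
  shows "(ci_chi n ds (of_int k / of_int N) =
           (\<Sum>j = 0..length ds. (-1) ^ (n + length ds + j) *
              (\<Sum>S | S \<subseteq> {..<length ds} \<and> card S = j.
                 ((of_int k / of_int N) * of_int (ci_c1 n ds) - 1 + (\<Sum>i\<in>S. of_nat (ds ! i)))
                   gchoose (n + length ds)))) \<and>
         (ci_c1 n ds mod N = 0 \<longrightarrow> ci_chi n ds (of_int k / of_int N) \<in> \<int>)"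
proof -
  have ds: "0 \<notin> set ds"
    using assms(1) by auto
  have scaled_c1_Ints: "of_int k / of_int N * of_int (ci_c1 n ds) \<in> (\<int> :: rat set)"
    if "ci_c1 n ds mod N = 0"
  proof -
    from that have "N dvd ci_c1 n ds"
      by (simp add: dvd_eq_mod_eq_0)
    then obtain q where "ci_c1 n ds = N * q"
      by (rule dvdE)
    then show ?thesis
      using assms(2) by simp
  qed
  show ?thesis
    by (intro conjI impI ci_chi_eq_gbinomial_sum ci_chi_in_Ints ds scaled_c1_Ints)
qed

end
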